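(* Let $K\in\mathbb{K}$ and $E\in\mathbb{M}^{N_s}_{k\times d}$. Then the Hessian quadratic form of $C$ at $K$ in direction $E$, $\nabla^2C(K)[E,E]=\frac{d^2}{ds^2}\big|_{s=0}C(K+sE)$, is $$\nabla^2C(K)[E,E]=2\big\langle (R+B^T\mathcal{E}(P^K)B)E\mathbf{X}^K,\,E\big\rangle-4\big\langle B^T\mathcal{E}\big((P^K)'[E]\big)\Gamma\mathbf{X}^K,\,E\big\rangle,$$ where $\Gamma=(A_1-B_1K_1,\dots,A_{N_s}-B_{N_s}K_{N_s})$ and $$(P^K)'[E]=\sum_{t=0}^\infty\mathcal{L}^t\big(E^TL^K+(L^K)^TE\big).$$ (All products, transposes and $\mathcal{E}$ act componentwise on tuples.)
   Context: Let $N_s\ge 1$ and $\Omega=\{1,\dots,N_s\}$. $\mathbb{M}^{N_s}_{n\times m}$ denotes the space of $N_s$-tuples $V=(V_1,\dots,V_{N_s})$ of real $n\times m$ matrices; operations on tuples are componentwise ($V+S$, $VS=(V_1S_1,\dots,V_{N_s}S_{N_s})$, $V^T$), and $\langle V,S\rangle=\sum_i\mathrm{tr}(V_i^TS_i)$. Markovian jump linear system: $x_{t+1}=A_{\omega(t)}x_t+B_{\omega(t)}u_t$ with $A_i\in\mathbb{R}^{d\times d}$, $B_i\in\mathbb{R}^{d\times k}$, $A=(A_i)$, $B=(B_i)$; $\{\omega(t)\}$ is a time-homogeneous Markov chain on $\Omega$ with transition probabilities $p_{ij}$ and initial distribution $\pi$ with $\pi_i>0$; $x_0$ is random, independent of the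 chain, with $\mathbb{E}[x_0x_0^T]\succ0$. The system is mean-square stabilizable. $Q=(Q_i)\succ0$, $R=(R_i)\succ0$. For $K\in\mathbb{M}^{N_s}_{k\times d}$, $u_t=-K_{\omega(t)}x_t$ and $C(K)=\mathbb{E}[\sum_{t\ge0}x_t^TQ_{\omega(t)}x_t+u_t^TR_{\omega(t)}u_t]$. $\mathbb{K}$ is the set of $K$ making the closed loop $x_{t+1}=\Gamma_{\omega(t)}x_t$, $\Gamma_i=A_i-B_iK_i$, mean-square stable (equivalently $C(K)<\infty$). Operators: $\mathcal{E}_i(V)=\sum_jp_{ij}V_j$, $\mathcal{E}(V)=(\mathcal{E}_i(V))_i$; $\mathcal{L}_i(V)=\Gamma_i^T\mathcal{E}_i(V)\Gamma_i$; $\mathcal{T}_j(V)=\sum_ip_{ij}\Gamma_iV_i\Gamma_i^T$. For $K\in\mathbb{K}$, $P^K$ solves $P_i^K=Q_i+K_i^TR_iK_i+\Gamma_i^T\mathcal{E}_i(P^K)\Gamma_i$; $L_i^K=(R_i+B_i^T\mathcal{E}_i(P^K)B_i)K_i-B_i^T\mathcal{E}_i(P^K)A_i$, $L^K=(L_i^K)_i$; $X_i(0)=\mathbb{E}[x_0x_0^T\mathbf{1}\{\omega(0)=i\}]$ and $\mathbf{X}^K=\sum_{t\ge0}\mathcal{T}^t(X(0))$. *)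

theory Defs
  imports "HOL-Analysis.Analysis"
begin

text \<open>Modes are the elements of a finite type 's (Omega = UNIV :: 's set).
  An N_s-tuple of n x m real matrices is an element of real^'m^'n^'s (component V $ i). The transition probabilities are p i j, initial distribution ppi,
  and S0 = E[x0 x0^T].\<close>

definition posdef :: "real^'n^'n \<Rightarrow> bool" where
  "posdef M \<longleftrightarrow> transpose M = M \<and> (\<forall>x. x \<noteq> 0 \<longrightarrow> x \<bullet> (M *v x) > 0)"

definition stochastic_matrix :: "('s::finite \<Rightarrow> 's \<Rightarrow> real) \<Rightarrow> bool" where
  "stochastic_matrix p \<longleftrightarrow> (\<forall>i j. p i j \<ge> 0) \<and> (\<forall>i. (\<Sum>j\<in>UNIV. p i j) = 1)"

definition prob_vector :: "('s::finite \<Rightarrow> real) \<Rightarrow> bool" where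
  "prob_vector mu \<longleftrightarrow> (\<forall>i. mu i \<ge> 0) \<and> (\<Sum>i\<in>UNIV. mu i) = 1"

definition tmul :: "'a::semiring_1^'n^'m^'s \<Rightarrow> 'a^'p^'n^'s \<Rightarrow> 'a^'p^'m^'s" where
  "tmul V S = (\<chi> i. V$i ** S$i)"

definition ttrans :: "'a^'n^'m^'s \<Rightarrow> 'a^'m^'n^'s" where
  "ttrans V = (\<chi> i. transpose (V$i))"

definition tinner :: "real^'n^'m^'s::finite \<Rightarrow> real^'n^'m^'s \<Rightarrow> real" where
  "tinner V S = (\<Sum>i\<in>UNIV. trace (transpose (V$i) ** S$i))"

definition gam :: "real^'d^'d^'s \<Rightarrow> real^'k^'d^'s \<Rightarrow> real^'d^'k^'s \<Rightarrow> real^'d^'d^'s" where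
  "gam A B K = (\<chi> i. A$i - B$i ** K$i)"

text \<open>Mode paths [w_0, ..., w_t], their probabilities, and the state transition matrix
  Phi with x_t = Gamma_{w_(t-1)} ... Gamma_{w_0} x_0.\<close>
definition paths :: "nat \<Rightarrow> 's list set" where
  "paths t = {ws. length ws = Suc t}"

fun chain_prob :: "('s \<Rightarrow> 's \<Rightarrow> real) \<Rightarrow> 's list \<Rightarrow> real" where
  "chain_prob p (w # w' # ws) = p w w' * chain_prob p (w' # ws)"
| "chain_prob p _ = 1"

definition path_prob :: "('s \<Rightarrow> real) \<Rightarrow> ('s \<Rightarrow> 's \<Rightarrow> real) \<Rightarrow> 's list \<Rightarrow> real" where
  "path_prob mu p ws = mu (hd ws) * chain_prob p ws"

fun stm :: "real^'d^'d^'s \<Rightarrow> 's list \<Rightarrow> real^'d^'d" where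
  "stm G (w # w' # ws) = stm G (w' # ws) ** G$w"
| "stm G _ = mat 1"

definition ms_stable :: "('s::finite \<Rightarrow> 's \<Rightarrow> real) \<Rightarrow> real^'d^'d^'s \<Rightarrow> bool" where
  "ms_stable p G \<longleftrightarrow> (\<forall>mu (x0::real^'d). prob_vector mu \<longrightarrow>
     (\<lambda>t. \<Sum>ws\<in>paths t. path_prob mu p ws * (norm (stm G ws *v x0))\<^sup>2) \<longlonglongrightarrow> 0)"

definition Kset :: "('s::finite \<Rightarrow> 's \<Rightarrow> real) \<Rightarrow> real^'d^'d^'s \<Rightarrow> real^'k^'d^'s
     \<Rightarrow> (real^'d^'k^'s) set" where
  "Kset p A B = {K. ms_stable p (gam A B K)}"

text \<open>Cost C(K) = E[sum_t x_t^T Q x_t + u_t^T R u_t], written out: for a fixed mode path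
  the conditional expectation of x_t^T M x_t equals trace (M Phi S0 Phi^T) since x0 is
  independent of the chain. (Finite exactly for K in Kset; there it is this series.)\<close>
definition stage_cost :: "('s::finite \<Rightarrow> real) \<Rightarrow> ('s \<Rightarrow> 's \<Rightarrow> real) \<Rightarrow> real^'d^'d \<Rightarrow>
     real^'d^'d^'s \<Rightarrow> real^'k^'d^'s \<Rightarrow> real^'d^'d^'s \<Rightarrow> real^'k^'k^'s \<Rightarrow> real^'d^'k^'s
     \<Rightarrow> nat \<Rightarrow> real" where
  "stage_cost ppi p S0 A B Q R K t =
     (\<Sum>ws\<in>paths t. path_prob ppi p ws *
        trace ((Q$(last ws) + transpose (K$(last ws)) ** R$(last ws) ** K$(last ws))
               ** stm (gam A B K) ws ** S0 ** transpose (stm (gam A B K) ws)))"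

definition cost where
  "cost ppi p S0 A B Q R K = (\<Sum>t. stage_cost ppi p S0 A B Q R K t)"

definition Eop :: "('s::finite \<Rightarrow> 's \<Rightarrow> real) \<Rightarrow> real^'n^'m^'s \<Rightarrow> real^'n^'m^'s" where
  "Eop p V = (\<chi> i. \<Sum>j\<in>UNIV. p i j *\<^sub>R V$j)"

definition Lop :: "('s::finite \<Rightarrow> 's \<Rightarrow> real) \<Rightarrow> real^'d^'d^'s \<Rightarrow> real^'d^'d^'s \<Rightarrow> real^'d^'d^'s" where
  "Lop p G V = (\<chi> i. transpose (G$i) ** (Eop p V)$i ** G$i)"

definition Top :: "('s::finite \<Rightarrow> 's \<Rightarrow> real) \<Rightarrow> real^'d^'d^'s \<Rightarrow> real^'d^'d^'s \<Rightarrow> real^'d^'d^'s" where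
  "Top p G V = (\<chi> j. \<Sum>i\<in>UNIV. p i j *\<^sub>R (G$i ** V$i ** transpose (G$i)))"

text \<open>P^K: the solution of P_i = Q_i + K_i^T R_i K_i + Gamma_i^T E_i(P) Gamma_i
  (unique for K in Kset).\<close>
definition PK :: "('s::finite \<Rightarrow> 's \<Rightarrow> real) \<Rightarrow> real^'d^'d^'s \<Rightarrow> real^'k^'d^'s \<Rightarrow>
     real^'d^'d^'s \<Rightarrow> real^'k^'k^'s \<Rightarrow> real^'d^'k^'s \<Rightarrow> real^'d^'d^'s" where
  "PK p A B Q R K = (THE P. \<forall>i. P$i = Q$i + transpose (K$i) ** R$i ** K$i
       + transpose ((gam A B K)$i) ** (Eop p P)$i ** (gam A B K)$i)"

definition LK :: "('s::finite \<Rightarrow> 's \<Rightarrow> real) \<Rightarrow> real^'d^'d^'s \<Rightarrow> real^'k^'d^'s \<Rightarrow>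
     real^'d^'d^'s \<Rightarrow> real^'k^'k^'s \<Rightarrow> real^'d^'k^'s \<Rightarrow> real^'d^'k^'s" where
  "LK p A B Q R K = (let P = PK p A B Q R K in
     (\<chi> i. (R$i + transpose (B$i) ** (Eop p P)$i ** B$i) ** K$i
            - transpose (B$i) ** (Eop p P)$i ** A$i))"

text \<open>X(0)_i = E[x0 x0^T 1{w(0)=i}] = pi_i S0 (independence), and X^K = sum_t T^t(X(0)).\<close>
definition X0 :: "('s::finite \<Rightarrow> real) \<Rightarrow> real^'d^'d \<Rightarrow> real^'d^'d^'s" where
  "X0 ppi S0 = (\<chi> i. ppi i *\<^sub>R S0)"

definition XK where
  "XK ppi p S0 A B K = (\<Sum>t. (Top p (gam A B K) ^^ t) (X0 ppi S0))"

definition dPK where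
  "dPK p A B Q R K E = (\<Sum>t. (Lop p (gam A B K) ^^ t)
     (tmul (ttrans E) (LK p A B Q R K) + tmul (ttrans (LK p A B Q R K)) E))"

end

theory Submission
  imports Defs
begin

text \<open>
  Along the line \<open>K + s E\<close> the closed-loop matrices are \<open>\<Gamma> - s B E\<close>, so the second-moment
  operator \<open>\<T>\<close> and the stage weight \<open>Q + K\<^sup>T R K\<close> become quadratic polynomials
  \<open>T(s) = T0 + s T1 + s\<^sup>2 T2\<close> and \<open>M(s) = M0 + s M1 + s\<^sup>2 M2\<close>. Mean-square stability says that
  the powers of \<open>T0\<close> tend to zero; this persists for small \<open>s\<close>, and then the cost is the pairing
  \<open>\<langle>M(s), (I - T(s))\<^sup>-\<^sup>1 X(0)\<rangle>\<close> with the Neumann series. Differentiating twice with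
  \<open>((I - T)\<^sup>-\<^sup>1)' = (I - T)\<^sup>-\<^sup>1 T' (I - T)\<^sup>-\<^sup>1\<close> gives resolvents of \<open>T0\<close> applied to \<open>X\<^sup>K\<close> and
  its derivative; moving them to the other side of the pairing turns them into resolvents of the
  adjoint \<open>\<L>\<close>, which produce \<open>P\<^sup>K\<close> from \<open>M0\<close> and \<open>(P\<^sup>K)'[E]\<close> from \<open>E\<^sup>T L\<^sup>K + (L\<^sup>K)\<^sup>T E\<close>.
\<close>

section \<open>Matrix algebra and the Frobenius inner product\<close>

lemma matrix_add_rdistrib: "((A::'a::semiring_1^'n::finite^'m) + B) ** (C::'a^'p^'n) = A ** C + B ** C"
  by (simp add: matrix_matrix_mult_def vec_eq_iff sum.distrib distrib_right)

lemma bounded_bilinear_matrix_mult: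
  "bounded_bilinear ((**) :: real^'n::finite^'m::finite \<Rightarrow> real^'p::finite^'n \<Rightarrow> real^'p^'m)"
  unfolding bilinear_conv_bounded_bilinear[symmetric] bilinear_def
  by (auto intro!: linearI simp: matrix_add_ldistrib matrix_add_rdistrib matrix_scalar_ac
      scalar_matrix_assoc[symmetric])

lemmas matrix_mult_simps =
  bounded_bilinear.add_left[OF bounded_bilinear_matrix_mult]
  bounded_bilinear.add_right[OF bounded_bilinear_matrix_mult]
  bounded_bilinear.diff_left[OF bounded_bilinear_matrix_mult]
  bounded_bilinear.diff_right[OF bounded_bilinear_matrix_mult]
  bounded_bilinear.minus_left[OF bounded_bilinear_matrix_mult]
  bounded_bilinear.minus_right[OF bounded_bilinear_matrix_mult]
  bounded_bilinear.scaleR_left[OF bounded_bilinear_matrix_mult]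
  bounded_bilinear.scaleR_right[OF bounded_bilinear_matrix_mult]
  bounded_bilinear.zero_left[OF bounded_bilinear_matrix_mult]
  bounded_bilinear.zero_right[OF bounded_bilinear_matrix_mult]

lemmas matrix_mult_sum =
  bounded_bilinear.sum_left[OF bounded_bilinear_matrix_mult]
  bounded_bilinear.sum_right[OF bounded_bilinear_matrix_mult]

lemma transpose_add: "transpose (A + B) = transpose A + transpose (B::'a::plus^'n::finite^'m::finite)"
  by (simp add: transpose_def vec_eq_iff)

lemma transpose_diff: "transpose (A - B) = transpose A - transpose (B::'a::minus^'n::finite^'m::finite)"
  by (simp add: transpose_def vec_eq_iff)

lemma transpose_uminus: "transpose (- A) = - transpose (A::'a::uminus^'n::finite^'m::finite)"
  by (simp add: transpose_def vec_eq_iff)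

lemma transpose_sum:
  "transpose (sum f S) = (\<Sum>i\<in>S. transpose (f i :: 'a::comm_monoid_add^'n::finite^'m::finite))"
  by (simp add: transpose_def vec_eq_iff)

lemmas transpose_simps = transpose_add transpose_diff transpose_uminus transpose_sum
  transpose_scalar matrix_transpose_mul

lemma trace_scaleR: "trace (c *\<^sub>R (A :: real^'n::finite^'n)) = c * trace A"
  by (simp add: trace_def sum_distrib_left)

lemma inner_matrix_eq_trace: "(A::real^'n::finite^'m::finite) \<bullet> B = trace (transpose A ** B)"
  by (simp add: inner_vec_def trace_def matrix_matrix_mult_def transpose_def) (rule sum.swap)

lemma inner_transpose: "transpose A \<bullet> transpose B = (A::real^'n::finite^'m::finite) \<bullet> B"
  by (simp add: inner_vec_def transpose_def) (rule sum.swap)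

lemma inner_matrix_mult_left:
  "((A::real^'n::finite^'m::finite) ** (B::real^'p::finite^'n)) \<bullet> C = B \<bullet> (transpose A ** C)"
  by (simp add: inner_matrix_eq_trace matrix_transpose_mul matrix_mul_assoc)

lemma inner_matrix_mult_right:
  "((A::real^'n::finite^'m::finite) ** (B::real^'p::finite^'n)) \<bullet> C = A \<bullet> (C ** transpose B)"
proof -
  have "(A ** B) \<bullet> C = trace (transpose B ** (transpose A ** C))"
    by (simp add: inner_matrix_eq_trace matrix_transpose_mul matrix_mul_assoc)
  also have "\<dots> = trace ((transpose A ** C) ** transpose B)"
    by (rule trace_mul_sym)
  finally show ?thesis
    by (simp add: inner_matrix_eq_trace matrix_mul_assoc)
qed

lemma inner_congruence:
  "(V::real^'n::finite^'m::finite) \<bullet> ((G::real^'a::finite^'m) ** W ** transpose (H::real^'b::finite^'n))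
    = (transpose G ** V ** H) \<bullet> W"
proof -
  have "V \<bullet> ((G ** W) ** transpose H) = (G ** W) \<bullet> (V ** H)"
    by (simp add: inner_commute[of V] inner_matrix_mult_right)
  also have "\<dots> = (transpose G ** V ** H) \<bullet> W"
    by (simp add: inner_matrix_mult_left inner_commute matrix_mul_assoc)
  finally show ?thesis .
qed

lemma inner_mult_symmetric:
  assumes "transpose X = X"
  shows "((Z::real^'n::finite^'m::finite) ** X) \<bullet> (E::real^'n^'m) = (transpose E ** Z) \<bullet> X"
proof -
  have "(Z ** X) \<bullet> E = Z \<bullet> (E ** X)"
    using assms by (simp add: inner_matrix_mult_right)
  then show ?thesis
    by (simp add: inner_matrix_mult_left)
qed

section \<open>Powers of bounded operators and the Neumann series\<close>

definition blinfun_power :: "('a::real_normed_vector \<Rightarrow>\<^sub>L 'a) \<Rightarrow> nat \<Rightarrow> 'a \<Rightarrow>\<^sub>L 'a" where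
  "blinfun_power F n = ((\<lambda>G. F o\<^sub>L G) ^^ n) id_blinfun"

lemma blinfun_power_0 [simp]: "blinfun_power F 0 = id_blinfun"
  by (simp add: blinfun_power_def)

lemma blinfun_power_Suc: "blinfun_power F (Suc n) = F o\<^sub>L blinfun_power F n"
  by (simp add: blinfun_power_def)

lemma blinfun_power_apply: "blinfun_apply (blinfun_power F n) = blinfun_apply F ^^ n"
  by (induction n) (auto simp: blinfun_power_Suc fun_eq_iff)

lemma blinfun_power_add: "blinfun_power F (m + n) = blinfun_power F m o\<^sub>L blinfun_power F n"
  by (rule blinfun_eqI) (simp add: blinfun_power_apply funpow_add)

lemma blinfun_power_mult: "blinfun_power F (m * n) = blinfun_power (blinfun_power F m) n"
  by (rule blinfun_eqI) (simp add: blinfun_power_apply funpow_mult)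

lemma norm_blinfun_power_le: "norm (blinfun_power F n) \<le> norm F ^ n"
proof (induction n)
  case 0
  then show ?case by (simp add: norm_blinfun_id_le)
next
  case (Suc n)
  have "norm (blinfun_power F (Suc n)) \<le> norm F * norm (blinfun_power F n)"
    unfolding blinfun_power_Suc by (rule norm_blinfun_compose)
  also have "\<dots> \<le> norm F * norm F ^ n"
    using Suc by (simp add: mult_left_mono)
  finally show ?case by simp
qed

lemma tendsto_blinfun_power:
  assumes "(F \<longlongrightarrow> F0) net"
  shows "((\<lambda>u. blinfun_power (F u) n) \<longlongrightarrow> blinfun_power F0 n) net"
proof (induction n)
  case (Suc n)
  show ?case
    unfolding blinfun_power_Suc
    by (rule bounded_bilinear.tendsto[OF bounded_bilinear_blinfun_compose assms Suc])
qed simp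

lemma norm_blinfun_power_le_geometric:
  assumes N: "0 < N" and d: "0 < d" "d \<le> 1" and FN: "norm (blinfun_power F N) \<le> d ^ N"
  shows "norm (blinfun_power F n) \<le> (\<Sum>r<N. norm (blinfun_power F r)) / d ^ N * d ^ n"
proof -
  define C where "C = (\<Sum>r<N. norm (blinfun_power F r))"
  define q where "q = n div N"
  define r where "r = n mod N"
  have n: "n = N * q + r" and rN: "r < N"
    using N by (simp_all add: q_def r_def)
  have "norm (blinfun_power F n) \<le> norm (blinfun_power F (N * q)) * norm (blinfun_power F r)"
    unfolding n blinfun_power_add by (rule norm_blinfun_compose)
  also have "\<dots> \<le> d ^ (N * q) * C"
  proof (rule mult_mono)
    have "norm (blinfun_power F (N * q)) \<le> norm (blinfun_power F N) ^ q"
      unfolding blinfun_power_mult by (rule norm_blinfun_power_le)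
    also have "\<dots> \<le> d ^ (N * q)"
      using FN by (simp add: power_mult power_mono)
    finally show "norm (blinfun_power F (N * q)) \<le> d ^ (N * q)" .
    show "norm (blinfun_power F r) \<le> C"
      unfolding C_def using rN by (intro member_le_sum) auto
  qed (use d in auto)
  also have "d ^ (N * q) = d ^ (N * q + N) / d ^ N"
    using d by (simp add: power_add)
  also have "d ^ (N * q + N) \<le> d ^ n"
    using d rN n by (intro power_decreasing) auto
  finally have "norm (blinfun_power F n) \<le> (d ^ n / d ^ N) * C"
    using d by (simp add: C_def sum_nonneg divide_right_mono mult_right_mono)
  then show ?thesis
    by (simp add: C_def divide_inverse ac_simps)
qed

lemma summable_norm_blinfun_power:
  assumes N: "0 < N" and FN: "norm (blinfun_power F N) < 1"
  shows "summable (\<lambda>n. norm (blinfun_power F n))"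
proof -
  define c where "c = norm (blinfun_power F N)"
  define d where "d = root N ((1 + c) / 2)"
  have "0 \<le> c" "c < 1"
    using FN by (simp_all add: c_def)
  then have d: "0 < d" "d < 1" and "norm (blinfun_power F N) \<le> d ^ N"
    using N by (auto simp: c_def[symmetric] d_def)
  then have bound: "norm (blinfun_power F n) \<le> (\<Sum>r<N. norm (blinfun_power F r)) / d ^ N * d ^ n" for n
    using N by (intro norm_blinfun_power_le_geometric) auto
  have "summable (\<lambda>n. (\<Sum>r<N. norm (blinfun_power F r)) / d ^ N * d ^ n)"
    using d by (intro summable_mult summable_geometric) simp
  then show ?thesis
    by (rule summable_comparison_test') (use bound in simp)
qed

lemma summable_norm_blinfun_power_if_tendsto_zero:
  assumes "(blinfun_power F \<longlongrightarrow> 0) sequentially"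
  shows "summable (\<lambda>n. norm (blinfun_power F n))"
proof -
  have "((\<lambda>n. norm (blinfun_power F n)) \<longlongrightarrow> 0) sequentially"
    using assms by (simp add: tendsto_norm_zero_iff)
  then have "\<forall>\<^sub>F n in sequentially. norm (blinfun_power F n) < 1"
    by (rule order_tendstoD(2)) simp
  then obtain N where "\<forall>n\<ge>N. norm (blinfun_power F n) < 1"
    by (auto simp: eventually_sequentially)
  then show ?thesis
    using summable_norm_blinfun_power[of "Suc N" F] by simp
qed

lemma eventually_blinfun_power_tendsto_zero:
  assumes cont: "(F \<longlongrightarrow> F x) (at x)" and lim: "(blinfun_power (F x) \<longlongrightarrow> 0) sequentially"
  shows "\<forall>\<^sub>F u in nhds x. (blinfun_power (F u) \<longlongrightarrow> 0) sequentially"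
proof -
  have "((\<lambda>n. norm (blinfun_power (F x) n)) \<longlongrightarrow> 0) sequentially"
    using lim by (simp add: tendsto_norm_zero_iff)
  then have "\<forall>\<^sub>F n in sequentially. norm (blinfun_power (F x) n) < 1"
    by (rule order_tendstoD(2)) simp
  then obtain N0 where "\<forall>n\<ge>N0. norm (blinfun_power (F x) n) < 1"
    by (auto simp: eventually_sequentially)
  then obtain N where N: "0 < N" "norm (blinfun_power (F x) N) < 1"
    by (meson lessI less_imp_le zero_less_Suc)
  have "((\<lambda>u. norm (blinfun_power (F u) N)) \<longlongrightarrow> norm (blinfun_power (F x) N)) (at x)"
    by (intro tendsto_norm tendsto_blinfun_power cont)
  then have "\<forall>\<^sub>F u in at x. norm (blinfun_power (F u) N) < 1"
    using N(2) by (rule order_tendstoD(2))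
  then have "\<forall>\<^sub>F u in nhds x. norm (blinfun_power (F u) N) < 1"
    using N(2) by (simp add: eventually_nhds_conv_at)
  then show ?thesis
  proof (rule eventually_mono)
    fix u assume "norm (blinfun_power (F u) N) < 1"
    then have "summable (\<lambda>n. norm (blinfun_power (F u) n))"
      by (rule summable_norm_blinfun_power[OF N(1)])
    then show "(blinfun_power (F u) \<longlongrightarrow> 0) sequentially"
      by (simp add: summable_LIMSEQ_zero tendsto_norm_zero_cancel)
  qed
qed

definition neumann :: "('a::real_normed_vector \<Rightarrow>\<^sub>L 'a) \<Rightarrow> 'a \<Rightarrow>\<^sub>L 'a" where
  "neumann F = suminf (blinfun_power F)"

context
  fixes F :: "'a::banach \<Rightarrow>\<^sub>L 'a"
  assumes power_tendsto_zero: "(blinfun_power F \<longlongrightarrow> 0) sequentially"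
begin

lemma sums_neumann_apply: "(\<lambda>n. blinfun_power F n x) sums neumann F x"
proof -
  have "summable (blinfun_power F)"
    by (rule summable_norm_cancel[OF summable_norm_blinfun_power_if_tendsto_zero[OF power_tendsto_zero]])
  then show ?thesis
    unfolding neumann_def by (intro bounded_linear.sums[OF blinfun.bounded_linear_left] summable_sums)
qed

lemma neumann_unfold_right: "neumann F x = neumann F (F x) + x"
proof -
  have "(\<lambda>n. blinfun_power F (Suc n) x) sums neumann F (F x)"
    using sums_neumann_apply[of "F x"] by (simp add: blinfun_power_apply funpow_Suc_right del: funpow.simps)
  then have "(\<lambda>n. blinfun_power F n x) sums (neumann F (F x) + x)"
    using sums_Suc_iff[of "\<lambda>n. blinfun_power F n x"] by simp
  then show ?thesis
    using sums_neumann_apply sums_unique2 by blast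
qed

lemma neumann_unfold_left: "neumann F x = F (neumann F x) + x"
proof -
  have "(\<lambda>n. blinfun_power F (Suc n) x) sums F (neumann F x)"
    using bounded_linear.sums[OF blinfun.bounded_linear_right sums_neumann_apply]
    by (simp add: blinfun_power_Suc)
  then have "(\<lambda>n. blinfun_power F n x) sums (F (neumann F x) + x)"
    using sums_Suc_iff[of "\<lambda>n. blinfun_power F n x"] by simp
  then show ?thesis
    using sums_neumann_apply sums_unique2 by blast
qed

lemma neumann_left_inverse: "neumann F (x - F x) = x"
  using neumann_unfold_right[of x] by (simp add: blinfun.diff_right)

lemma neumann_right_inverse: "neumann F y - F (neumann F y) = y"
  using neumann_unfold_left[of y] by (metis add_diff_cancel_left')

lemma neumann_unique: "x - F x = y \<Longrightarrow> x = neumann F y"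
  by (metis neumann_left_inverse)

lemma neumann_commute:
  assumes "linear C" and "\<And>y. C (F y) = F (C y)"
  shows "C (neumann F y) = neumann F (C y)"
proof -
  have "C (neumann F y) - F (C (neumann F y)) = C (neumann F y - F (neumann F y))"
    using assms by (simp add: linear_diff)
  also have "\<dots> = C y"
    by (simp only: neumann_right_inverse)
  finally have "C (neumann F y) - F (C (neumann F y)) = C y" .
  then show ?thesis
    by (rule neumann_unique)
qed

end

lemma sums_funpow_neumann:
  fixes f :: "'a::banach \<Rightarrow> 'a"
  assumes "bounded_linear f" and "(blinfun_power (Blinfun f) \<longlongrightarrow> 0) sequentially"
  shows "(\<lambda>n. (f ^^ n) x) sums neumann (Blinfun f) x"
  using sums_neumann_apply[OF assms(2)] by (simp add: blinfun_power_apply bounded_linear_Blinfun_apply[OF assms(1)])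

lemma neumann_diff:
  fixes F G :: "'a::banach \<Rightarrow>\<^sub>L 'a"
  assumes F: "(blinfun_power F \<longlongrightarrow> 0) sequentially" and G: "(blinfun_power G \<longlongrightarrow> 0) sequentially"
  shows "neumann F - neumann G = neumann F o\<^sub>L (F - G) o\<^sub>L neumann G"
proof (rule blinfun_eqI)
  fix x
  define z where "z = neumann G x"
  have "F z - G z = (z - G z) - (z - F z)"
    by simp
  also have "\<dots> = x - (z - F z)"
    unfolding z_def by (simp only: neumann_right_inverse[OF G])
  finally have "neumann F (F z - G z) = neumann F x - z"
    by (simp only: blinfun.diff_right[of "neumann F" x "z - F z"] neumann_left_inverse[OF F])
  then show "(neumann F - neumann G) x = (neumann F o\<^sub>L (F - G) o\<^sub>L neumann G) x"
    by (simp add: z_def blinfun.bilinear_simps)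
qed

section \<open>Continuity and derivative of the resolvent\<close>

lemma has_vector_derivative_iff_quotient:
  fixes f :: "real \<Rightarrow> 'a::real_normed_vector"
  shows "(f has_vector_derivative D) (at x within S) \<longleftrightarrow>
    ((\<lambda>y. (f y - f x) /\<^sub>R (y - x)) \<longlongrightarrow> D) (at x within S)"
proof -
  have "norm (f y - f x - (y - x) *\<^sub>R D) / norm (y - x) = norm ((f y - f x) /\<^sub>R (y - x) - D)"
    if "y \<noteq> x" for y
  proof -
    have "f y - f x - (y - x) *\<^sub>R D = (y - x) *\<^sub>R ((f y - f x) /\<^sub>R (y - x) - D)"
      using that by (simp add: scaleR_diff_right)
    then show ?thesis
      using that by simp
  qed
  then have "((\<lambda>y. norm (f y - f x - (y - x) *\<^sub>R D) / norm (y - x)) \<longlongrightarrow> 0) (at x within S)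
      \<longleftrightarrow> ((\<lambda>y. norm ((f y - f x) /\<^sub>R (y - x) - D)) \<longlongrightarrow> 0) (at x within S)"
    by (intro Lim_cong_within) auto
  then show ?thesis
    by (simp add: has_vector_derivative_def has_derivative_iff_norm bounded_linear_scaleR_left
        tendsto_norm_zero_iff LIM_zero_iff)
qed

lemma norm_neumann_diff_le:
  fixes F G :: "'a::banach \<Rightarrow>\<^sub>L 'a"
  assumes "(blinfun_power F \<longlongrightarrow> 0) sequentially" and "(blinfun_power G \<longlongrightarrow> 0) sequentially"
  shows "norm (neumann F - neumann G) \<le> norm (neumann F) * norm (F - G) * norm (neumann G)"
  unfolding neumann_diff[OF assms]
  by (meson norm_blinfun_compose mult_right_mono norm_ge_zero order_trans)

lemma eventually_norm_neumann_le:
  fixes F :: "'b \<Rightarrow> ('a::banach \<Rightarrow>\<^sub>L 'a)"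
  assumes lim: "(F \<longlongrightarrow> F0) net"
    and stable: "\<forall>\<^sub>F u in net. (blinfun_power (F u) \<longlongrightarrow> 0) sequentially"
    and stable0: "(blinfun_power F0 \<longlongrightarrow> 0) sequentially"
  shows "\<forall>\<^sub>F u in net. norm (neumann (F u)) \<le> 2 * norm (neumann F0)"
proof -
  have "((\<lambda>u. norm (F u - F0) * norm (neumann F0)) \<longlongrightarrow> 0) net"
    using tendsto_mult_left_zero[OF tendsto_norm_zero[OF LIM_zero[OF lim]]] by simp
  then have "\<forall>\<^sub>F u in net. norm (F u - F0) * norm (neumann F0) < 1/2"
    by (rule order_tendstoD(2)) simp
  with stable show ?thesis
  proof eventually_elim
    case (elim u)
    have "norm (neumann (F u)) \<le> norm (neumann F0) + norm (neumann (F u) - neumann F0)"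
      by (metis add.commute diff_add_cancel norm_triangle_ineq)
    also have "\<dots> \<le> norm (neumann F0) + norm (neumann (F u)) * (norm (F u - F0) * norm (neumann F0))"
      using norm_neumann_diff_le[OF elim(1) stable0] by (simp add: mult.assoc)
    also have "\<dots> \<le> norm (neumann F0) + norm (neumann (F u)) * (1/2)"
      using elim(2) by (intro add_left_mono mult_left_mono) simp_all
    finally show ?case
      by simp
  qed
qed

lemma tendsto_neumann:
  fixes F :: "'b \<Rightarrow> ('a::banach \<Rightarrow>\<^sub>L 'a)"
  assumes lim: "(F \<longlongrightarrow> F0) net"
    and stable: "\<forall>\<^sub>F u in net. (blinfun_power (F u) \<longlongrightarrow> 0) sequentially"
    and stable0: "(blinfun_power F0 \<longlongrightarrow> 0) sequentially"
  shows "((\<lambda>u. neumann (F u)) \<longlongrightarrow> neumann F0) net"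
proof -
  define c where "c = norm (neumann F0)"
  have "((\<lambda>u. neumann (F u) - neumann F0) \<longlongrightarrow> 0) net"
  proof (rule Lim_null_comparison)
    show "\<forall>\<^sub>F u in net. norm (neumann (F u) - neumann F0) \<le> 2 * c * c * norm (F u - F0)"
      using stable eventually_norm_neumann_le[OF assms]
    proof eventually_elim
      case (elim u)
      have "norm (neumann (F u) - neumann F0) \<le> norm (neumann (F u)) * norm (F u - F0) * c"
        unfolding c_def by (rule norm_neumann_diff_le[OF elim(1) stable0])
      also have "\<dots> \<le> 2 * c * norm (F u - F0) * c"
        using elim(2) unfolding c_def by (intro mult_right_mono) simp_all
      finally show ?case
        by (simp add: ac_simps)
    qed
    show "((\<lambda>u. 2 * c * c * norm (F u - F0)) \<longlongrightarrow> 0) net"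
      by (rule tendsto_mult_right_zero[OF tendsto_norm_zero[OF LIM_zero[OF lim]]])
  qed
  then show ?thesis
    by (simp add: LIM_zero_iff)
qed

lemma has_vector_derivative_neumann:
  fixes F :: "real \<Rightarrow> ('a::banach \<Rightarrow>\<^sub>L 'a)"
  assumes stable: "\<forall>\<^sub>F u in nhds u0. (blinfun_power (F u) \<longlongrightarrow> 0) sequentially"
    and deriv: "(F has_vector_derivative F') (at u0)"
  shows "((\<lambda>u. neumann (F u)) has_vector_derivative neumann (F u0) o\<^sub>L F' o\<^sub>L neumann (F u0)) (at u0)"
proof -
  have stable_at: "\<forall>\<^sub>F u in at u0. (blinfun_power (F u) \<longlongrightarrow> 0) sequentially"
    using stable by (simp add: eventually_nhds_conv_at)
  have stable0: "(blinfun_power (F u0) \<longlongrightarrow> 0) sequentially"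
    using stable by (rule eventually_nhds_x_imp_x)
  have cont: "(F \<longlongrightarrow> F u0) (at u0)"
    using has_vector_derivative_continuous[OF deriv] by (simp add: continuous_at)
  have "((\<lambda>y. neumann (F y) o\<^sub>L ((F y - F u0) /\<^sub>R (y - u0)) o\<^sub>L neumann (F u0))
      \<longlongrightarrow> neumann (F u0) o\<^sub>L F' o\<^sub>L neumann (F u0)) (at u0)"
    using deriv unfolding has_vector_derivative_iff_quotient
    by (intro bounded_bilinear.tendsto[OF bounded_bilinear_blinfun_compose]
        tendsto_neumann[OF cont stable_at stable0] tendsto_const)
  moreover have "\<forall>\<^sub>F y in at u0. neumann (F y) o\<^sub>L ((F y - F u0) /\<^sub>R (y - u0)) o\<^sub>L neumann (F u0)
      = (neumann (F y) - neumann (F u0)) /\<^sub>R (y - u0)"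
    using stable_at
  proof eventually_elim
    case (elim y)
    show ?case
      unfolding neumann_diff[OF elim stable0]
      by (simp add: bounded_bilinear.scaleR_left[OF bounded_bilinear_blinfun_compose]
          bounded_bilinear.scaleR_right[OF bounded_bilinear_blinfun_compose])
  qed
  ultimately show ?thesis
    unfolding has_vector_derivative_iff_quotient by (rule Lim_transform_eventually)
qed

section \<open>Adjoint operators\<close>

lemma inner_funpow_adjoint:
  fixes T L :: "'a::real_inner \<Rightarrow> 'a"
  assumes "\<And>V W. V \<bullet> T W = L V \<bullet> W"
  shows "V \<bullet> (T ^^ n) W = (L ^^ n) V \<bullet> W"
proof (induction n arbitrary: V W)
  case (Suc n)
  have "V \<bullet> (T ^^ Suc n) W = (L ^^ n) V \<bullet> T W"
    by (simp add: funpow_Suc_right Suc del: funpow.simps)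
  also have "\<dots> = (L ^^ Suc n) V \<bullet> W"
    by (simp add: assms)
  finally show ?case .
qed simp

lemma norm_blinfun_adjoint_le:
  fixes T L :: "'a::real_inner \<Rightarrow>\<^sub>L 'a"
  assumes adj: "\<And>V W. V \<bullet> T W = L V \<bullet> W"
  shows "norm L \<le> norm T"
proof (rule norm_blinfun_bound)
  fix V
  have "(norm (L V))\<^sup>2 = V \<bullet> T (L V)"
    by (simp add: adj power2_norm_eq_inner)
  also have "\<dots> \<le> norm V * (norm T * norm (L V))"
    by (metis norm_cauchy_schwarz norm_blinfun mult_left_mono norm_ge_zero order_trans)
  finally have "norm (L V) * norm (L V) \<le> (norm T * norm V) * norm (L V)"
    by (simp add: power2_eq_square ac_simps)
  then show "norm (L V) \<le> norm T * norm V"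
    by (cases "norm (L V) = 0") (simp_all add: mult_le_cancel_right)
qed simp

lemma blinfun_power_adjoint_tendsto_zero:
  fixes T L :: "'a::real_inner \<Rightarrow>\<^sub>L 'a"
  assumes adj: "\<And>V W. V \<bullet> T W = L V \<bullet> W" and lim: "(blinfun_power T \<longlongrightarrow> 0) sequentially"
  shows "(blinfun_power L \<longlongrightarrow> 0) sequentially"
proof (rule Lim_null_comparison[OF always_eventually])
  show "\<forall>n. norm (blinfun_power L n) \<le> norm (blinfun_power T n)"
    using inner_funpow_adjoint[OF adj]
    by (intro allI norm_blinfun_adjoint_le) (simp add: blinfun_power_apply)
  show "((\<lambda>n. norm (blinfun_power T n)) \<longlongrightarrow> 0) sequentially"
    using lim by (simp add: tendsto_norm_zero_iff)
qed

lemma inner_neumann_adjoint: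
  fixes T L :: "'a::{real_inner,banach} \<Rightarrow>\<^sub>L 'a"
  assumes adj: "\<And>V W. V \<bullet> T W = L V \<bullet> W" and lim: "(blinfun_power T \<longlongrightarrow> 0) sequentially"
  shows "M \<bullet> neumann T W = neumann L M \<bullet> W"
proof -
  note limL = blinfun_power_adjoint_tendsto_zero[OF adj lim]
  have "M \<bullet> neumann T W = (neumann L M - L (neumann L M)) \<bullet> neumann T W"
    by (simp only: neumann_right_inverse[OF limL])
  also have "\<dots> = neumann L M \<bullet> (neumann T W - T (neumann T W))"
    by (simp add: inner_diff_left inner_diff_right adj)
  also have "\<dots> = neumann L M \<bullet> W"
    by (simp only: neumann_right_inverse[OF lim])
  finally show ?thesis .
qed

section \<open>The second-moment operators\<close>

text \<open>Cross terms of \<open>Top\<close> and \<open>Lop\<close>, which appear when these are expanded at \<open>G - u H\<close>.\<close>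
definition Top_pair :: "('s::finite \<Rightarrow> 's \<Rightarrow> real) \<Rightarrow> real^'d::finite^'d^'s \<Rightarrow> real^'d^'d^'s
    \<Rightarrow> real^'d^'d^'s \<Rightarrow> real^'d^'d^'s" where
  "Top_pair p G H W = (\<chi> j. \<Sum>i\<in>UNIV. p i j *\<^sub>R (G$i ** W$i ** transpose (H$i)))"

definition Lop_pair :: "('s::finite \<Rightarrow> 's \<Rightarrow> real) \<Rightarrow> real^'d::finite^'d^'s \<Rightarrow> real^'d^'d^'s
    \<Rightarrow> real^'d^'d^'s \<Rightarrow> real^'d^'d^'s" where
  "Lop_pair p G H V = (\<chi> i. transpose (G$i) ** (Eop p V)$i ** H$i)"

lemma Top_eq_Top_pair: "Top p G = Top_pair p G G"
  by (simp add: fun_eq_iff Top_def Top_pair_def)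

lemma Lop_eq_Lop_pair: "Lop p G = Lop_pair p G G"
  by (simp add: fun_eq_iff Lop_def Lop_pair_def)

lemma bounded_linear_Top_pair: "bounded_linear (Top_pair p G H)"
  unfolding linear_conv_bounded_linear[symmetric]
  by (intro linearI) (simp_all add: vec_eq_iff Top_pair_def matrix_mult_simps scaleR_add_right
      sum.distrib scaleR_sum_right ac_simps)

lemma bounded_linear_Lop_pair: "bounded_linear (Lop_pair p G H)"
  unfolding linear_conv_bounded_linear[symmetric]
  by (intro linearI) (simp_all add: vec_eq_iff Lop_pair_def Eop_def matrix_mult_simps matrix_mult_sum
      scaleR_add_right sum.distrib scaleR_sum_right ac_simps)

lemma bounded_linear_Top: "bounded_linear (Top p G)"
  unfolding Top_eq_Top_pair by (rule bounded_linear_Top_pair)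

lemma bounded_linear_Lop: "bounded_linear (Lop p G)"
  unfolding Lop_eq_Lop_pair by (rule bounded_linear_Lop_pair)

lemma inner_tuple: "(V::real^'n::finite^'m::finite^'s::finite) \<bullet> W = (\<Sum>i\<in>UNIV. V$i \<bullet> W$i)"
  by (rule inner_vec_def)

lemma inner_Top_pair: "V \<bullet> Top_pair p G H W = Lop_pair p G H V \<bullet> W"
proof -
  have "V \<bullet> Top_pair p G H W = (\<Sum>j\<in>UNIV. \<Sum>i\<in>UNIV. p i j * (V$j \<bullet> (G$i ** W$i ** transpose (H$i))))"
    by (simp add: Top_pair_def inner_tuple inner_sum_right)
  also have "\<dots> = (\<Sum>i\<in>UNIV. \<Sum>j\<in>UNIV. p i j * ((transpose (G$i) ** V$j ** H$i) \<bullet> W$i))"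
    by (simp add: inner_congruence) (rule sum.swap)
  also have "\<dots> = Lop_pair p G H V \<bullet> W"
    by (simp add: Lop_pair_def Eop_def inner_tuple matrix_mult_sum matrix_mult_simps inner_sum_left)
  finally show ?thesis .
qed

lemma ttrans_nth [simp]: "ttrans V $ i = transpose (V$i)"
  by (simp add: ttrans_def)

lemma linear_ttrans: "linear (ttrans :: real^'n::finite^'m::finite^'s::finite \<Rightarrow> _)"
  by (intro linearI) (simp_all add: vec_eq_iff transpose_simps)

lemma Top_ttrans: "Top p G (ttrans W) = ttrans (Top p G W)"
  by (simp add: vec_eq_iff Top_def transpose_simps matrix_mul_assoc)

lemma Lop_ttrans: "Lop p G (ttrans V) = ttrans (Lop p G V)"
  by (simp add: vec_eq_iff Lop_def Eop_def transpose_simps matrix_mul_assoc)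

lemma ttrans_neumann:
  fixes F :: "(real^'n::finite^'n^'s::finite) \<Rightarrow>\<^sub>L (real^'n^'n^'s)"
  assumes "(blinfun_power F \<longlongrightarrow> 0) sequentially" and "\<And>V. F (ttrans V) = ttrans (F V)"
    and "ttrans V = V"
  shows "ttrans (neumann F V) = neumann F V"
  using neumann_commute[OF assms(1) linear_ttrans] assms(2,3) by metis

lemma transpose_Eop: "ttrans V = V \<Longrightarrow> transpose (Eop p V $ i) = Eop p V $ i"
  by (simp add: Eop_def transpose_simps) (metis ttrans_nth)

lemma tmul_nth [simp]: "tmul V S $ i = V$i ** S$i"
  by (simp add: tmul_def)

lemma tinner_eq_inner: "tinner V S = V \<bullet> S"
  by (simp add: tinner_def inner_tuple inner_matrix_eq_trace)

section \<open>Mean-square stability\<close>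

lemma finite_paths [simp]: "finite (paths t :: 's::finite list set)"
proof -
  have "finite {xs. set xs \<subseteq> (UNIV::'s set) \<and> length xs = Suc t}"
    by (rule finite_lists_length_eq) simp
  then show ?thesis
    by (simp add: paths_def)
qed

lemma paths_nonempty: "ws \<in> paths t \<Longrightarrow> ws \<noteq> []"
  by (auto simp: paths_def)

lemma paths_0: "paths 0 = (\<lambda>w. [w]) ` UNIV"
  by (auto simp: paths_def length_Suc_conv)

lemma paths_Suc: "paths (Suc t) = (\<lambda>(w, ws). w # ws) ` (UNIV \<times> paths t)"
  by (auto simp: paths_def length_Suc_conv image_iff)

lemma chain_prob_Cons: "ws \<noteq> [] \<Longrightarrow> chain_prob p (w # ws) = p w (hd ws) * chain_prob p ws"
  by (cases ws) auto

lemma stm_Cons: "ws \<noteq> [] \<Longrightarrow> stm G (w # ws) = stm G ws ** G$w"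
  by (cases ws) auto

lemma chain_prob_nonneg: "(\<And>i j. p i j \<ge> 0) \<Longrightarrow> chain_prob p ws \<ge> 0"
  by (induction p ws rule: chain_prob.induct) auto

lemma Top_funpow_nth:
  fixes G :: "real^'d::finite^'d^'s::finite"
  shows "(Top p G ^^ t) Y $ j = (\<Sum>ws\<in>paths t.
    if last ws = j then chain_prob p ws *\<^sub>R (stm G ws ** Y$(hd ws) ** transpose (stm G ws)) else 0)"
proof (induction t arbitrary: Y)
  case 0
  show ?case
    unfolding paths_0 by (subst sum.reindex) (auto simp: inj_on_def)
next
  case (Suc t)
  define f where "f ws = (if last ws = j
      then chain_prob p ws *\<^sub>R (stm G ws ** Y$(hd ws) ** transpose (stm G ws)) else 0)" for ws
  have step: "(if last ws = j then chain_prob p ws *\<^sub>R (stm G ws ** Top p G Y $ hd ws ** transpose (stm G ws)) else 0)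
      = (\<Sum>w\<in>UNIV. f (w # ws))" if "ws \<in> paths t" for ws
  proof -
    have ne: "ws \<noteq> []"
      using that by (rule paths_nonempty)
    have "stm G ws ** Top p G Y $ hd ws ** transpose (stm G ws)
        = (\<Sum>w\<in>UNIV. p w (hd ws) *\<^sub>R (stm G (w # ws) ** Y$w ** transpose (stm G (w # ws))))"
      by (simp add: Top_def matrix_mult_sum matrix_mult_simps stm_Cons[OF ne] matrix_transpose_mul
          matrix_mul_assoc)
    then show ?thesis
      unfolding f_def using ne by (auto simp: chain_prob_Cons scaleR_sum_right ac_simps)
  qed
  have "(Top p G ^^ Suc t) Y $ j = (\<Sum>ws\<in>paths t. \<Sum>w\<in>UNIV. f (w # ws))"
    by (simp add: funpow_Suc_right Suc.IH step del: funpow.simps)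
  also have "\<dots> = (\<Sum>(w, ws)\<in>UNIV \<times> paths t. f (w # ws))"
    by (subst sum.swap) (simp add: sum.cartesian_product)
  also have "\<dots> = (\<Sum>ws\<in>paths (Suc t). f ws)"
    unfolding paths_Suc by (subst sum.reindex) (auto simp: inj_on_def case_prod_beta intro!: sum.cong)
  finally show ?case
    by (simp add: f_def)
qed

lemma norm_Top_funpow_le:
  fixes G :: "real^'d::finite^'d^'s::finite"
  assumes "\<And>i j. p i j \<ge> 0"
  shows "norm ((Top p G ^^ t) Y) \<le>
    (\<Sum>ws\<in>paths t. chain_prob p ws * norm (stm G ws ** Y$(hd ws) ** transpose (stm G ws)))"
proof -
  define h where "h ws = chain_prob p ws * norm (stm G ws ** Y$(hd ws) ** transpose (stm G ws))" for ws
  have "norm ((Top p G ^^ t) Y) \<le> (\<Sum>j\<in>UNIV. norm ((Top p G ^^ t) Y $ j))"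
    unfolding norm_vec_def by (rule L2_set_le_sum) simp
  also have "\<dots> \<le> (\<Sum>j\<in>UNIV. \<Sum>ws\<in>paths t. if last ws = j then h ws else 0)"
    unfolding Top_funpow_nth h_def
    by (intro sum_mono order_trans[OF norm_sum]) (simp add: chain_prob_nonneg[OF assms])
  also have "\<dots> = (\<Sum>ws\<in>paths t. h ws)"
    by (subst sum.swap) simp
  finally show ?thesis
    by (simp add: h_def)
qed

definition outer :: "real^'n::finite \<Rightarrow> real^'n \<Rightarrow> real^'n^'n" where
  "outer x y = (\<chi> a b. x$a * y$b)"

lemma congruence_outer: "(M::real^'n::finite^'n) ** outer x y ** transpose M = outer (M *v x) (M *v y)"
proof -
  have "(\<Sum>c\<in>UNIV. (\<Sum>k\<in>UNIV. M$a$k * (x$k * y$c)) * M$b$c)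
      = (\<Sum>k\<in>UNIV. M$a$k * x$k) * (\<Sum>c\<in>UNIV. M$b$c * y$c)" for a b
    by (simp add: sum_product sum_distrib_right sum_distrib_left ac_simps)
  then show ?thesis
    by (simp add: vec_eq_iff matrix_matrix_mult_def outer_def transpose_def matrix_vector_mult_def)
qed

lemma norm_outer: "norm (outer x y) = norm x * norm (y::real^'n::finite)"
proof -
  have "outer x y $ a = x$a *\<^sub>R y" for a
    by (simp add: vec_eq_iff outer_def)
  then have "norm (outer x y) = L2_set (\<lambda>a. norm y * \<bar>x$a\<bar>) UNIV"
    by (simp add: norm_vec_def[of "outer x y"] mult.commute)
  also have "\<dots> = norm y * norm x"
    by (simp add: L2_set_right_distrib norm_vec_def[of x])
  finally show ?thesis
    by simp
qed

lemma chain_prob_congruence_axis_outer_le: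
  fixes G :: "real^'d::finite^'d^'s::finite" and j :: 's
  assumes p: "\<And>i j. p i j \<ge> 0"
  defines "mu \<equiv> \<lambda>i. if i = j then 1 else (0::real)"
  shows "chain_prob p ws * norm (stm G ws ** axis j (outer x y) $ hd ws ** transpose (stm G ws))
    \<le> path_prob mu p ws * (norm (stm G ws *v x))\<^sup>2 + path_prob mu p ws * (norm (stm G ws *v y))\<^sup>2"
proof -
  define a where "a = norm (stm G ws *v x)"
  define b where "b = norm (stm G ws *v y)"
  have "0 \<le> a * b"
    by (simp add: a_def b_def)
  then have "a * b \<le> a\<^sup>2 + b\<^sup>2"
    using sum_squares_bound[of a b] by linarith
  moreover have "0 \<le> path_prob mu p ws"
    using chain_prob_nonneg[of p ws, OF p] by (simp add: path_prob_def mu_def)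
  ultimately have "path_prob mu p ws * (a * b) \<le> path_prob mu p ws * (a\<^sup>2 + b\<^sup>2)"
    by (rule mult_left_mono)
  moreover have "norm (stm G ws ** axis j (outer x y) $ hd ws ** transpose (stm G ws)) = mu (hd ws) * (a * b)"
    by (cases "hd ws = j") (simp_all add: axis_def mu_def congruence_outer norm_outer a_def b_def)
  then have "chain_prob p ws * norm (stm G ws ** axis j (outer x y) $ hd ws ** transpose (stm G ws))
      = path_prob mu p ws * (a * b)"
    by (simp add: path_prob_def)
  ultimately show ?thesis
    by (simp add: a_def b_def distrib_left)
qed

text \<open>On \<open>axis j (outer x y)\<close> the iterates of \<open>Top\<close> are controlled by the second moments of
  \<open>x\<^sub>t\<close> for \<open>x\<^sub>0 = x\<close>, \<open>x\<^sub>0 = y\<close> and initial mode \<open>j\<close>; these tuples span the whole space.\<close>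
lemma ms_stable_Top_funpow_outer:
  fixes G :: "real^'d::finite^'d^'s::finite"
  assumes st: "stochastic_matrix p" and ms: "ms_stable p G"
  shows "((\<lambda>t. (Top p G ^^ t) (axis j (outer x y))) \<longlongrightarrow> 0) sequentially"
proof -
  define mu where "mu i = (if i = j then 1 else 0 :: real)" for i
  define m where "m z t = (\<Sum>ws\<in>paths t. path_prob mu p ws * (norm (stm G ws *v z))\<^sup>2)" for z t
  have p: "\<And>i j. p i j \<ge> 0"
    using st by (simp add: stochastic_matrix_def)
  have m0: "(m z \<longlongrightarrow> 0) sequentially" for z
    using ms unfolding ms_stable_def m_def by (simp add: prob_vector_def mu_def)
  show ?thesis
  proof (rule Lim_null_comparison[OF always_eventually])
    show "\<forall>t. norm ((Top p G ^^ t) (axis j (outer x y))) \<le> m x t + m y t"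
      unfolding m_def sum.distrib[symmetric] mu_def
      by (intro allI order_trans[OF norm_Top_funpow_le[OF p] sum_mono]
          chain_prob_congruence_axis_outer_le[OF p])
    show "((\<lambda>t. m x t + m y t) \<longlongrightarrow> 0) sequentially"
      using tendsto_add[OF m0 m0] by simp
  qed
qed

lemma Basis_tuple_eq_axis_outer:
  assumes "b \<in> (Basis :: (real^'d::finite^'d^'s::finite) set)"
  obtains j a c where "b = axis j (outer (axis a 1) (axis c 1))"
proof -
  from assms obtain j a c where "b = axis j (axis a (axis c (1::real)))"
    unfolding Basis_vec_def by auto
  moreover have "axis a (axis c (1::real)) = outer (axis a 1) (axis c 1)"
    by (simp add: vec_eq_iff axis_def outer_def)
  ultimately show ?thesis
    using that by simp
qed

lemma ms_stable_blinfun_power_Top: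
  fixes G :: "real^'d::finite^'d^'s::finite"
  assumes "stochastic_matrix p" and "ms_stable p G"
  shows "(blinfun_power (Blinfun (Top p G)) \<longlongrightarrow> 0) sequentially"
proof (rule tendsto_componentwise1)
  fix b :: "real^'d^'d^'s"
  assume "b \<in> Basis"
  then obtain j a c where b: "b = axis j (outer (axis a 1) (axis c 1))"
    by (rule Basis_tuple_eq_axis_outer)
  show "((\<lambda>n. blinfun_power (Blinfun (Top p G)) n b) \<longlongrightarrow> blinfun_apply 0 b) sequentially"
    using ms_stable_Top_funpow_outer[OF assms]
    by (simp add: b blinfun_power_apply bounded_linear_Blinfun_apply[OF bounded_linear_Top])
qed

lemma blinfun_power_Lop:
  fixes G :: "real^'d::finite^'d^'s::finite"
  assumes "(blinfun_power (Blinfun (Top p G)) \<longlongrightarrow> 0) sequentially"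
  shows "(blinfun_power (Blinfun (Lop p G)) \<longlongrightarrow> 0) sequentially"
proof (rule blinfun_power_adjoint_tendsto_zero[OF _ assms])
  fix V W :: "real^'d^'d^'s"
  show "V \<bullet> Blinfun (Top p G) W = Blinfun (Lop p G) V \<bullet> W"
    unfolding bounded_linear_Blinfun_apply[OF bounded_linear_Top] bounded_linear_Blinfun_apply[OF bounded_linear_Lop]
    by (simp only: Top_eq_Top_pair Lop_eq_Lop_pair inner_Top_pair)
qed

section \<open>The cost as a resolvent pairing\<close>

definition stage_weight :: "real^'d::finite^'d^'s::finite \<Rightarrow> real^'k::finite^'k^'s \<Rightarrow> real^'d^'k^'s
    \<Rightarrow> real^'d^'d^'s" where
  "stage_weight Q R K = (\<chi> i. Q$i + transpose (K$i) ** R$i ** K$i)"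

lemma inner_Top_funpow_X0:
  fixes G :: "real^'d::finite^'d^'s::finite"
  shows "M \<bullet> (Top p G ^^ t) (X0 ppi S0) = (\<Sum>ws\<in>paths t.
    path_prob ppi p ws * trace (transpose (M$(last ws)) ** stm G ws ** S0 ** transpose (stm G ws)))"
proof -
  have "M \<bullet> (Top p G ^^ t) (X0 ppi S0) = (\<Sum>j\<in>UNIV. \<Sum>ws\<in>paths t. if last ws = j then
      M$j \<bullet> (chain_prob p ws *\<^sub>R (stm G ws ** (ppi (hd ws) *\<^sub>R S0) ** transpose (stm G ws))) else 0)"
    by (simp add: inner_tuple Top_funpow_nth inner_sum_right if_distrib[of "inner _"] X0_def cong: if_cong)
  also have "\<dots> = (\<Sum>ws\<in>paths t.
      M$(last ws) \<bullet> (chain_prob p ws *\<^sub>R (stm G ws ** (ppi (hd ws) *\<^sub>R S0) ** transpose (stm G ws))))"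
    by (subst sum.swap) simp
  finally show ?thesis
    by (simp add: inner_matrix_eq_trace path_prob_def matrix_mult_simps trace_scaleR matrix_mul_assoc ac_simps)
qed

lemma transpose_stage_weight:
  assumes "\<And>i. transpose (Q$i) = Q$i" and "\<And>i. transpose (R$i) = R$i"
  shows "transpose (stage_weight Q R K $ i) = stage_weight Q R K $ i"
  using assms by (simp add: stage_weight_def transpose_simps matrix_mul_assoc)

lemma stage_cost_eq_inner:
  assumes "\<And>i. transpose (Q$i) = Q$i" and "\<And>i. transpose (R$i) = R$i"
  shows "stage_cost ppi p S0 A B Q R K t = stage_weight Q R K \<bullet> (Top p (gam A B K) ^^ t) (X0 ppi S0)"
  unfolding inner_Top_funpow_X0 transpose_stage_weight[OF assms]
  by (simp add: stage_cost_def stage_weight_def)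

lemma cost_eq_inner_neumann:
  assumes "\<And>i. transpose (Q$i) = Q$i" and "\<And>i. transpose (R$i) = R$i"
    and "(blinfun_power (Blinfun (Top p (gam A B K))) \<longlongrightarrow> 0) sequentially"
  shows "cost ppi p S0 A B Q R K = stage_weight Q R K \<bullet> neumann (Blinfun (Top p (gam A B K))) (X0 ppi S0)"
proof -
  have "(\<lambda>t. stage_weight Q R K \<bullet> (Top p (gam A B K) ^^ t) (X0 ppi S0))
      sums (stage_weight Q R K \<bullet> neumann (Blinfun (Top p (gam A B K))) (X0 ppi S0))"
    by (rule bounded_linear.sums[OF bounded_linear_inner_right sums_funpow_neumann[OF bounded_linear_Top assms(3)]])
  then show ?thesis
    unfolding cost_def stage_cost_eq_inner[OF assms(1,2)] by (rule sums_unique[symmetric])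
qed

lemma XK_eq_neumann:
  assumes "(blinfun_power (Blinfun (Top p (gam A B K))) \<longlongrightarrow> 0) sequentially"
  shows "XK ppi p S0 A B K = neumann (Blinfun (Top p (gam A B K))) (X0 ppi S0)"
  unfolding XK_def using sums_funpow_neumann[OF bounded_linear_Top assms] by (rule sums_unique[symmetric])

lemma PK_eq_neumann:
  assumes "(blinfun_power (Blinfun (Lop p (gam A B K))) \<longlongrightarrow> 0) sequentially"
  shows "PK p A B Q R K = neumann (Blinfun (Lop p (gam A B K))) (stage_weight Q R K)"
proof -
  let ?L = "Blinfun (Lop p (gam A B K))"
  have Lapply: "blinfun_apply ?L = Lop p (gam A B K)"
    by (rule bounded_linear_Blinfun_apply[OF bounded_linear_Lop])
  have fixpoint: "(\<forall>i. P$i = Q$i + transpose (K$i) ** R$i ** K$i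
        + transpose (gam A B K $ i) ** Eop p P $ i ** gam A B K $ i)
      \<longleftrightarrow> P - ?L P = stage_weight Q R K" for P
    by (auto simp: Lapply vec_eq_iff Lop_def stage_weight_def algebra_simps)
  show ?thesis
    unfolding PK_def fixpoint
    by (rule the_equality) (use neumann_right_inverse[OF assms] neumann_unique[OF assms] in blast)+
qed

lemma dPK_eq_neumann:
  assumes "(blinfun_power (Blinfun (Lop p (gam A B K))) \<longlongrightarrow> 0) sequentially"
  shows "dPK p A B Q R K E = neumann (Blinfun (Lop p (gam A B K)))
    (tmul (ttrans E) (LK p A B Q R K) + tmul (ttrans (LK p A B Q R K)) E)"
  unfolding dPK_def using sums_funpow_neumann[OF bounded_linear_Lop assms] by (rule sums_unique[symmetric])

section \<open>Second derivative of a resolvent pairing along a quadratic pencil\<close>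

lemma eventually_blinfun_power_quadratic_tendsto_zero:
  fixes T0 T1 T2 :: "'a::banach \<Rightarrow>\<^sub>L 'a"
  assumes "(blinfun_power T0 \<longlongrightarrow> 0) sequentially"
  shows "\<forall>\<^sub>F u in nhds 0. (blinfun_power (T0 + u *\<^sub>R T1 + u\<^sup>2 *\<^sub>R T2) \<longlongrightarrow> 0) sequentially"
proof -
  have "((\<lambda>u::real. T0 + u *\<^sub>R T1 + u\<^sup>2 *\<^sub>R T2) \<longlongrightarrow> T0 + 0 *\<^sub>R T1 + 0\<^sup>2 *\<^sub>R T2) (at 0)"
    by (intro tendsto_intros)
  then show ?thesis
    using eventually_blinfun_power_tendsto_zero[where F="\<lambda>u. T0 + u *\<^sub>R T1 + u\<^sup>2 *\<^sub>R T2"] assms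
    by simp
qed

lemma eventually_has_vector_derivative_neumann_quadratic:
  fixes T0 T1 T2 :: "'a::banach \<Rightarrow>\<^sub>L 'a"
  defines "R \<equiv> \<lambda>u::real. neumann (T0 + u *\<^sub>R T1 + u\<^sup>2 *\<^sub>R T2)"
  assumes "(blinfun_power T0 \<longlongrightarrow> 0) sequentially"
  shows "\<forall>\<^sub>F u in nhds 0. (R has_vector_derivative R u o\<^sub>L (T1 + (2 * u) *\<^sub>R T2) o\<^sub>L R u) (at u)"
proof -
  have "\<forall>\<^sub>F u in nhds 0. \<forall>\<^sub>F v in nhds u.
      (blinfun_power (T0 + v *\<^sub>R T1 + v\<^sup>2 *\<^sub>R T2) \<longlongrightarrow> 0) sequentially"
    using eventually_blinfun_power_quadratic_tendsto_zero[OF assms(2)] by (simp add: eventually_eventually)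
  then show ?thesis
    unfolding R_def
  proof (rule eventually_mono)
    fix u :: real
    assume "\<forall>\<^sub>F v in nhds u. (blinfun_power (T0 + v *\<^sub>R T1 + v\<^sup>2 *\<^sub>R T2) \<longlongrightarrow> 0) sequentially"
    moreover have "((\<lambda>u. T0 + u *\<^sub>R T1 + u\<^sup>2 *\<^sub>R T2) has_vector_derivative T1 + (2 * u) *\<^sub>R T2) (at u)"
      by (auto intro!: derivative_eq_intros)
    ultimately show "((\<lambda>u. neumann (T0 + u *\<^sub>R T1 + u\<^sup>2 *\<^sub>R T2)) has_vector_derivative
        neumann (T0 + u *\<^sub>R T1 + u\<^sup>2 *\<^sub>R T2) o\<^sub>L (T1 + (2 * u) *\<^sub>R T2) o\<^sub>L
        neumann (T0 + u *\<^sub>R T1 + u\<^sup>2 *\<^sub>R T2)) (at u)"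
      by (rule has_vector_derivative_neumann)
  qed
qed

lemma has_real_derivative_neumann_pairing:
  fixes T0 T1 T2 :: "'a::{real_inner,banach} \<Rightarrow>\<^sub>L 'a" and M0 M1 M2 Y :: 'a
  defines "F \<equiv> \<lambda>u::real. T0 + u *\<^sub>R T1 + u\<^sup>2 *\<^sub>R T2"
    and "M \<equiv> \<lambda>u::real. M0 + u *\<^sub>R M1 + u\<^sup>2 *\<^sub>R M2"
    and "X \<equiv> neumann T0 Y" and "Z \<equiv> neumann T0 (T1 (neumann T0 Y))"
  assumes stable: "(blinfun_power T0 \<longlongrightarrow> 0) sequentially"
  obtains g where "\<forall>\<^sub>F u in nhds 0. ((\<lambda>u. M u \<bullet> neumann (F u) Y) has_real_derivative g u) (at u)"
    and "(g has_real_derivative 2 * (M0 \<bullet> neumann T0 (T1 Z + T2 X) + M1 \<bullet> Z + M2 \<bullet> X)) (at 0)"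
proof -
  define F' where "F' u = T1 + (2 * u) *\<^sub>R T2" for u :: real
  define M' where "M' u = M1 + (2 * u) *\<^sub>R M2" for u :: real
  define R where "R u = neumann (F u)" for u
  have dF': "(F' has_vector_derivative 2 *\<^sub>R T2) (at u)" for u
    unfolding F'_def by (auto intro!: derivative_eq_intros)
  have dM: "(M has_vector_derivative M' u) (at u)" for u
    unfolding M_def M'_def by (auto intro!: derivative_eq_intros)
  have dM': "(M' has_vector_derivative 2 *\<^sub>R M2) (at u)" for u
    unfolding M'_def by (auto intro!: derivative_eq_intros)
  have dR: "\<forall>\<^sub>F u in nhds 0. (R has_vector_derivative R u o\<^sub>L F' u o\<^sub>L R u) (at u)"
    unfolding R_def F_def F'_def by (rule eventually_has_vector_derivative_neumann_quadratic[OF stable])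
  have dX: "\<forall>\<^sub>F u in nhds 0. ((\<lambda>u. R u Y) has_vector_derivative R u (F' u (R u Y))) (at u)"
    using dR by eventually_elim
      (drule bounded_linear.has_vector_derivative[OF blinfun.bounded_linear_left], simp)
  define g where "g u = M u \<bullet> R u (F' u (R u Y)) + M' u \<bullet> R u Y" for u
  have "\<forall>\<^sub>F u in nhds 0. ((\<lambda>u. M u \<bullet> R u Y) has_real_derivative g u) (at u)"
    using dX
  proof eventually_elim
    case (elim u)
    show ?case
      using bounded_bilinear.has_vector_derivative[OF bounded_bilinear_inner dM elim]
      by (simp add: g_def has_real_derivative_iff_has_vector_derivative)
  qed
  moreover have "(g has_real_derivative 2 * (M0 \<bullet> neumann T0 (T1 Z + T2 X) + M1 \<bullet> Z + M2 \<bullet> X)) (at 0)"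
  proof -
    have dR0: "(R has_vector_derivative R 0 o\<^sub>L F' 0 o\<^sub>L R 0) (at 0)"
      using dR by (rule eventually_nhds_x_imp_x)
    have dX0: "((\<lambda>u. R u Y) has_vector_derivative R 0 (F' 0 (R 0 Y))) (at 0)"
      using dX by (rule eventually_nhds_x_imp_x)
    have "((\<lambda>u. R u (F' u (R u Y))) has_vector_derivative
        R 0 (F' 0 (R 0 (F' 0 (R 0 Y))) + (2 *\<^sub>R T2) (R 0 Y)) + R 0 (F' 0 (R 0 (F' 0 (R 0 Y))))) (at 0)"
      using bounded_bilinear.has_vector_derivative[OF bounded_bilinear_blinfun_apply dR0
          bounded_bilinear.has_vector_derivative[OF bounded_bilinear_blinfun_apply dF' dX0]]
      by simp
    then have "(g has_vector_derivative
        M 0 \<bullet> (R 0 (F' 0 (R 0 (F' 0 (R 0 Y))) + (2 *\<^sub>R T2) (R 0 Y)) + R 0 (F' 0 (R 0 (F' 0 (R 0 Y)))))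
        + M' 0 \<bullet> R 0 (F' 0 (R 0 Y)) + (M' 0 \<bullet> R 0 (F' 0 (R 0 Y)) + (2 *\<^sub>R M2) \<bullet> R 0 Y)) (at 0)"
      unfolding g_def
      by (intro has_vector_derivative_add bounded_bilinear.has_vector_derivative[OF bounded_bilinear_inner]
          dM dM' dX0)
    moreover have "R 0 = neumann T0" and "F' 0 = T1" and "M 0 = M0" and "M' 0 = M1"
      by (simp_all add: R_def F_def F'_def M_def M'_def)
    ultimately show ?thesis
      by (simp add: has_real_derivative_iff_has_vector_derivative X_def Z_def
          blinfun.bilinear_simps inner_add_right algebra_simps)
  qed
  ultimately show ?thesis
    using that unfolding R_def by blast
qed

section \<open>Perturbing the gain along a direction\<close>

lemma gam_add_scaleR: "gam A B (K + u *\<^sub>R E) = gam A B K - u *\<^sub>R tmul B E"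
  by (simp add: vec_eq_iff gam_def matrix_mult_simps algebra_simps)

lemma Top_pair_diff_scaleR:
  "Top_pair p (G - u *\<^sub>R H) (G - u *\<^sub>R H) W
    = Top_pair p G G W - u *\<^sub>R (Top_pair p H G W + Top_pair p G H W) + u\<^sup>2 *\<^sub>R Top_pair p H H W"
  by (simp add: vec_eq_iff Top_pair_def matrix_mult_simps transpose_simps algebra_simps power2_eq_square
      sum.distrib sum_subtractf scaleR_sum_right)

locale perturbed_closed_loop =
  fixes p :: "'s::finite \<Rightarrow> 's \<Rightarrow> real" and A :: "real^'d::finite^'d^'s" and B :: "real^'k::finite^'d^'s"
    and Q :: "real^'d^'d^'s" and R :: "real^'k^'k^'s" and K E :: "real^'d^'k^'s"
    and ppi :: "'s \<Rightarrow> real" and S0 :: "real^'d^'d"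
  assumes stochastic: "stochastic_matrix p" and stabilizing: "K \<in> Kset p A B"
    and Q_symmetric: "\<And>i. transpose (Q$i) = Q$i" and R_symmetric: "\<And>i. transpose (R$i) = R$i"
    and S0_symmetric: "transpose S0 = S0"
begin

abbreviation "\<Gamma> \<equiv> gam A B K"
abbreviation "BE \<equiv> tmul B E"

definition "T0 = Blinfun (Top p \<Gamma>)"
definition "L0 = Blinfun (Lop p \<Gamma>)"
definition "T1 = Blinfun (\<lambda>W. - (Top_pair p BE \<Gamma> W + Top_pair p \<Gamma> BE W))"
definition "T2 = Blinfun (Top_pair p BE BE)"
definition "M1 = (\<chi> i. transpose (E$i) ** R$i ** K$i + transpose (K$i) ** R$i ** E$i)"
definition "M2 = (\<chi> i. transpose (E$i) ** R$i ** E$i)"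

lemma T0_apply: "T0 W = Top p \<Gamma> W"
  by (simp add: T0_def bounded_linear_Blinfun_apply bounded_linear_Top)

lemma L0_apply: "L0 V = Lop p \<Gamma> V"
  by (simp add: L0_def bounded_linear_Blinfun_apply bounded_linear_Lop)

lemma T1_apply: "T1 W = - (Top_pair p BE \<Gamma> W + Top_pair p \<Gamma> BE W)"
  unfolding T1_def
  by (intro bounded_linear_Blinfun_apply[THEN fun_cong] bounded_linear_minus bounded_linear_add
      bounded_linear_Top_pair)

lemma T2_apply: "T2 W = Top_pair p BE BE W"
  by (simp add: T2_def bounded_linear_Blinfun_apply bounded_linear_Top_pair)

lemma T0_power_tendsto_zero: "(blinfun_power T0 \<longlongrightarrow> 0) sequentially"
  using stabilizing unfolding T0_def Kset_def
  by (intro ms_stable_blinfun_power_Top stochastic) simp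

lemma L0_power_tendsto_zero: "(blinfun_power L0 \<longlongrightarrow> 0) sequentially"
  unfolding L0_def by (rule blinfun_power_Lop[OF T0_power_tendsto_zero[unfolded T0_def]])

lemma inner_neumann_T0: "V \<bullet> neumann T0 W = neumann L0 V \<bullet> W"
  by (rule inner_neumann_adjoint[OF _ T0_power_tendsto_zero])
    (simp add: T0_apply L0_apply Top_eq_Top_pair Lop_eq_Lop_pair inner_Top_pair)

lemma XK_eq: "XK ppi p S0 A B K = neumann T0 (X0 ppi S0)"
  unfolding T0_def by (rule XK_eq_neumann[OF T0_power_tendsto_zero[unfolded T0_def]])

lemma PK_eq: "PK p A B Q R K = neumann L0 (stage_weight Q R K)"
  unfolding L0_def by (rule PK_eq_neumann[OF L0_power_tendsto_zero[unfolded L0_def]])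

lemma dPK_eq:
  "dPK p A B Q R K E = neumann L0 (tmul (ttrans E) (LK p A B Q R K) + tmul (ttrans (LK p A B Q R K)) E)"
  unfolding L0_def by (rule dPK_eq_neumann[OF L0_power_tendsto_zero[unfolded L0_def]])

lemma Top_perturbed: "Blinfun (Top p (gam A B (K + u *\<^sub>R E))) = T0 + u *\<^sub>R T1 + u\<^sup>2 *\<^sub>R T2"
  by (rule blinfun_eqI)
    (simp add: bounded_linear_Blinfun_apply bounded_linear_Top blinfun.bilinear_simps T0_apply T1_apply
      T2_apply Top_eq_Top_pair gam_add_scaleR Top_pair_diff_scaleR bounded_linear_Top_pair scaleR_diff_right
      scaleR_add_right)

lemma stage_weight_perturbed:
  "stage_weight Q R (K + u *\<^sub>R E) = stage_weight Q R K + u *\<^sub>R M1 + u\<^sup>2 *\<^sub>R M2"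
  by (simp add: vec_eq_iff stage_weight_def M1_def M2_def transpose_simps matrix_mult_simps
      algebra_simps power2_eq_square)

lemma cost_perturbed:
  "\<forall>\<^sub>F u in nhds 0. cost ppi p S0 A B Q R (K + u *\<^sub>R E)
    = (stage_weight Q R K + u *\<^sub>R M1 + u\<^sup>2 *\<^sub>R M2) \<bullet> neumann (T0 + u *\<^sub>R T1 + u\<^sup>2 *\<^sub>R T2) (X0 ppi S0)"
  using eventually_blinfun_power_quadratic_tendsto_zero[OF T0_power_tendsto_zero, of T1 T2]
  by eventually_elim
    (simp add: cost_eq_inner_neumann Q_symmetric R_symmetric Top_perturbed stage_weight_perturbed)

definition "dXK = neumann T0 (T1 (XK ppi p S0 A B K))"

lemma cost_second_derivative:
  obtains g where "\<forall>\<^sub>F s in nhds 0. ((\<lambda>s. cost ppi p S0 A B Q R (K + s *\<^sub>R E)) has_real_derivative g s) (at s)"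
    and "(g has_real_derivative 2 * (stage_weight Q R K \<bullet> neumann T0 (T1 dXK + T2 (XK ppi p S0 A B K))
      + M1 \<bullet> dXK + M2 \<bullet> XK ppi p S0 A B K)) (at 0)"
proof -
  obtain g where pairing: "\<forall>\<^sub>F u in nhds 0. ((\<lambda>u. (stage_weight Q R K + u *\<^sub>R M1 + u\<^sup>2 *\<^sub>R M2)
        \<bullet> neumann (T0 + u *\<^sub>R T1 + u\<^sup>2 *\<^sub>R T2) (X0 ppi S0)) has_real_derivative g u) (at u)"
    and second: "(g has_real_derivative 2 * (stage_weight Q R K \<bullet> neumann T0 (T1 dXK + T2 (XK ppi p S0 A B K))
      + M1 \<bullet> dXK + M2 \<bullet> XK ppi p S0 A B K)) (at 0)"
    unfolding dXK_def XK_eq by (rule has_real_derivative_neumann_pairing[OF T0_power_tendsto_zero])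
  have "\<forall>\<^sub>F s in nhds 0. \<forall>\<^sub>F u in nhds s. cost ppi p S0 A B Q R (K + u *\<^sub>R E)
      = (stage_weight Q R K + u *\<^sub>R M1 + u\<^sup>2 *\<^sub>R M2) \<bullet> neumann (T0 + u *\<^sub>R T1 + u\<^sup>2 *\<^sub>R T2) (X0 ppi S0)"
    using cost_perturbed by (simp only: eventually_eventually)
  with pairing have "\<forall>\<^sub>F s in nhds 0.
      ((\<lambda>s. cost ppi p S0 A B Q R (K + s *\<^sub>R E)) has_real_derivative g s) (at s)"
  proof eventually_elim
    case (elim s)
    then show ?case
      using DERIV_cong_ev[OF refl elim(2) refl] by simp
  qed
  with second show ?thesis
    using that by blast
qed

lemma transpose_XK_nth: "transpose (XK ppi p S0 A B K $ i) = XK ppi p S0 A B K $ i"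
proof -
  have "ttrans (X0 ppi S0) = X0 ppi S0"
    by (simp add: vec_eq_iff X0_def transpose_scalar S0_symmetric)
  then have "ttrans (XK ppi p S0 A B K) = XK ppi p S0 A B K"
    unfolding XK_eq by (intro ttrans_neumann T0_power_tendsto_zero) (simp_all add: T0_apply Top_ttrans)
  then show ?thesis
    by (metis ttrans_nth)
qed

lemma ttrans_PK: "ttrans (PK p A B Q R K) = PK p A B Q R K"
  unfolding PK_eq
  by (intro ttrans_neumann L0_power_tendsto_zero)
    (simp_all add: L0_apply Lop_ttrans vec_eq_iff transpose_stage_weight Q_symmetric R_symmetric)

lemma ttrans_dPK: "ttrans (dPK p A B Q R K E) = dPK p A B Q R K E"
  unfolding dPK_eq
  by (intro ttrans_neumann L0_power_tendsto_zero)
    (simp_all add: L0_apply Lop_ttrans vec_eq_iff transpose_simps add.commute)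

lemma LK_variation:
  "tmul (ttrans E) (LK p A B Q R K) + tmul (ttrans (LK p A B Q R K)) E
    = M1 - Lop_pair p BE \<Gamma> (PK p A B Q R K) - Lop_pair p \<Gamma> BE (PK p A B Q R K)"
proof (subst vec_eq_iff, intro allI)
  fix i
  have "transpose (Eop p (PK p A B Q R K) $ i) = Eop p (PK p A B Q R K) $ i"
    by (rule transpose_Eop[OF ttrans_PK])
  then show "(tmul (ttrans E) (LK p A B Q R K) + tmul (ttrans (LK p A B Q R K)) E) $ i
    = (M1 - Lop_pair p BE \<Gamma> (PK p A B Q R K) - Lop_pair p \<Gamma> BE (PK p A B Q R K)) $ i"
    by (simp add: LK_def Let_def M1_def Lop_pair_def gam_def matrix_mult_simps transpose_simps
        matrix_mul_assoc R_symmetric algebra_simps)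
qed

text \<open>Moving \<open>neumann T0\<close> across the pairing turns the first-order terms into the source
  \<open>E\<^sup>T L\<^sup>K + (L\<^sup>K)\<^sup>T E\<close> of the Lyapunov equation for \<open>(P\<^sup>K)'[E]\<close>.\<close>
lemma first_variation_pairing:
  "stage_weight Q R K \<bullet> neumann T0 (T1 dXK) + M1 \<bullet> dXK = dPK p A B Q R K E \<bullet> T1 (XK ppi p S0 A B K)"
proof -
  have "stage_weight Q R K \<bullet> neumann T0 (T1 dXK) + M1 \<bullet> dXK
      = (M1 - Lop_pair p BE \<Gamma> (PK p A B Q R K) - Lop_pair p \<Gamma> BE (PK p A B Q R K)) \<bullet> dXK"
    by (simp add: inner_neumann_T0 PK_eq[symmetric] T1_apply inner_Top_pair inner_diff_right inner_diff_left)
  also have "\<dots> = dPK p A B Q R K E \<bullet> T1 (XK ppi p S0 A B K)"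
    unfolding LK_variation[symmetric] dPK_eq dXK_def by (rule inner_neumann_T0)
  finally show ?thesis .
qed

lemma inner_T2_eq_tinner:
  assumes "\<And>i. transpose (X$i) = X$i"
  shows "P \<bullet> T2 X + M2 \<bullet> X = tinner (tmul (tmul (\<chi> i. R$i + transpose (B$i) ** (Eop p P)$i ** B$i) E) X) E"
proof -
  have "tinner (tmul (tmul (\<chi> i. R$i + transpose (B$i) ** (Eop p P)$i ** B$i) E) X) E
      = (\<Sum>i\<in>UNIV. (transpose (E$i) ** ((R$i + transpose (B$i) ** (Eop p P)$i ** B$i) ** E$i)) \<bullet> X$i)"
    by (simp add: tinner_eq_inner inner_tuple inner_mult_symmetric[OF assms])
  also have "\<dots> = Lop_pair p BE BE P \<bullet> X + M2 \<bullet> X"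
    by (simp add: inner_tuple Lop_pair_def M2_def matrix_mult_simps transpose_simps matrix_mul_assoc
        inner_add_left sum.distrib)
  finally show ?thesis
    by (simp add: T2_apply inner_Top_pair)
qed

lemma inner_T1_eq_tinner:
  assumes "\<And>i. transpose (X$i) = X$i" and "ttrans P = P"
  shows "P \<bullet> T1 X = - 2 * tinner (tmul (tmul (tmul (ttrans B) (Eop p P)) \<Gamma>) X) E"
proof -
  have "tinner (tmul (tmul (tmul (ttrans B) (Eop p P)) \<Gamma>) X) E = Lop_pair p BE \<Gamma> P \<bullet> X"
    by (simp add: tinner_eq_inner inner_tuple inner_mult_symmetric[OF assms(1)] Lop_pair_def
        transpose_simps matrix_mul_assoc)
  moreover have "Lop_pair p \<Gamma> BE P \<bullet> X = Lop_pair p BE \<Gamma> P \<bullet> X"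
    unfolding inner_tuple
  proof (rule sum.cong[OF refl])
    fix i
    have "Lop_pair p \<Gamma> BE P $ i \<bullet> X $ i = transpose (Lop_pair p \<Gamma> BE P $ i) \<bullet> transpose (X $ i)"
      by (simp only: inner_transpose)
    then show "Lop_pair p \<Gamma> BE P $ i \<bullet> X $ i = Lop_pair p BE \<Gamma> P $ i \<bullet> X $ i"
      by (simp add: Lop_pair_def assms transpose_Eop transpose_simps matrix_mul_assoc)
  qed
  ultimately show ?thesis
    by (simp add: T1_apply inner_Top_pair inner_diff_right)
qed

lemma hessian_value:
  "2 * (stage_weight Q R K \<bullet> neumann T0 (T1 dXK + T2 (XK ppi p S0 A B K)) + M1 \<bullet> dXK + M2 \<bullet> XK ppi p S0 A B K)
    = 2 * tinner (tmul (tmul (\<chi> i. R$i + transpose (B$i) ** (Eop p (PK p A B Q R K))$i ** B$i) E)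
                       (XK ppi p S0 A B K)) E
      - 4 * tinner (tmul (tmul (tmul (ttrans B) (Eop p (dPK p A B Q R K E))) \<Gamma>) (XK ppi p S0 A B K)) E"
proof -
  have "stage_weight Q R K \<bullet> neumann T0 (T2 (XK ppi p S0 A B K)) + M2 \<bullet> XK ppi p S0 A B K
      = tinner (tmul (tmul (\<chi> i. R$i + transpose (B$i) ** (Eop p (PK p A B Q R K))$i ** B$i) E)
          (XK ppi p S0 A B K)) E"
    unfolding inner_neumann_T0 PK_eq[symmetric] by (rule inner_T2_eq_tinner[OF transpose_XK_nth])
  moreover have "2 * (stage_weight Q R K \<bullet> neumann T0 (T1 dXK + T2 (XK ppi p S0 A B K))
        + M1 \<bullet> dXK + M2 \<bullet> XK ppi p S0 A B K)
      = 2 * (stage_weight Q R K \<bullet> neumann T0 (T1 dXK) + M1 \<bullet> dXK)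
        + 2 * (stage_weight Q R K \<bullet> neumann T0 (T2 (XK ppi p S0 A B K)) + M2 \<bullet> XK ppi p S0 A B K)"
    by (simp add: blinfun.add_right inner_add_right algebra_simps)
  ultimately show ?thesis
    unfolding first_variation_pairing inner_T1_eq_tinner[OF transpose_XK_nth ttrans_dPK] by simp
qed

end

theorem lemma2:
  fixes A :: "real^'d::finite^'d^'s::finite" and B :: "real^'k::finite^'d^'s"
    and Q :: "real^'d^'d^'s" and R :: "real^'k^'k^'s"
    and K E :: "real^'d^'k^'s"
    and p :: "'s \<Rightarrow> 's \<Rightarrow> real" and ppi :: "'s \<Rightarrow> real" and S0 :: "real^'d^'d"
  assumes "stochastic_matrix p"
    and "prob_vector ppi" and "\<forall>i. ppi i > 0"
    and "posdef S0"
    and "Kset p A B \<noteq> {}"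
    and "\<forall>i. posdef (Q$i)" and "\<forall>i. posdef (R$i)"
    and "K \<in> Kset p A B"
  shows "\<exists>g. (\<forall>\<^sub>F s in nhds 0.
              ((\<lambda>s. cost ppi p S0 A B Q R (K + s *\<^sub>R E)) has_real_derivative g s) (at s))
           \<and> (g has_real_derivative
                2 * tinner (tmul (tmul (\<chi> i. R$i + transpose (B$i) ** (Eop p (PK p A B Q R K))$i ** B$i) E)
                                  (XK ppi p S0 A B K)) E
              - 4 * tinner (tmul (tmul (tmul (ttrans B) (Eop p (dPK p A B Q R K E))) (gam A B K))
                                  (XK ppi p S0 A B K)) E) (at 0)"
proof -
  interpret perturbed_closed_loop p A B Q R K E ppi S0
    using assms by unfold_locales (simp_all add: posdef_def)
  obtain g where "\<forall>\<^sub>F s in nhds 0. ((\<lambda>s. cost ppi p S0 A B Q R (K + s *\<^sub>R E)) has_real_derivative g s) (at s)"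
    and "(g has_real_derivative 2 * (stage_weight Q R K \<bullet> neumann T0 (T1 dXK + T2 (XK ppi p S0 A B K))
      + M1 \<bullet> dXK + M2 \<bullet> XK ppi p S0 A B K)) (at 0)"
    by (rule cost_second_derivative)
  then show ?thesis
    unfolding hessian_value by blast
qed

end
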